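(* Let $X$ be a continuous real-valued random variable and fix an integer $K \ge 1$. For each $n > K$, let $Z = Z_n$ be the random variable produced by the SMOTE-$K$ procedure (described in the context) from an i.i.d. sample $X_1, \dots, X_n$ drawn from $X$. Then $Z$ converges to $X$ in probability as $n \to \infty$.
   Context: SMOTE-$K$ procedure: given a sample $X_1,\dots,X_n$ of real numbers and a rank $1 \le K \le n-1$: (1) choose an index $i$ uniformly at random from $\{1,\dots,n\}$; (2) find the $K$ nearest neighbors $X_{i,(1)}, \dots, X_{i,(K)}$ of $X_i$ among the other sample points $\{X_j: j\ne i\}$, where $X_{i,(k)}$ realizes the $k$-th smallest of the distances $|X_j - X_i|$, $j\neq i$; (3) choose one of them, $X_{i,(k)}$, uniformly at random; (4) draw $\lambda \sim U(0,1)$ independently; (5) output $Z = X_i + \lambda (X_{i,(k)} - X_i)$. The random variable $X$ appearing in the conclusion is taken to be the sample point $X_i$ from which $Z$ is generated (which has the distribution of $X$), so the convergence means $P(|Z - X_i| > \varepsilon) \to 0$ for every $\varepsilon > 0$. *)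

theory Defs
  imports "HOL-Probability.Probability"
begin

text \<open>Ties (a null event for atomless distributions)
  are broken by smaller index, since sort_key is a stable sort.\<close>
definition nn_index :: "(nat \<Rightarrow> real) \<Rightarrow> nat \<Rightarrow> nat \<Rightarrow> nat \<Rightarrow> nat" where
  "nn_index x n i k = sort_key (\<lambda>j. \<bar>x j - x i\<bar>) (filter (\<lambda>j. j \<noteq> i) [0..<n]) ! (k - 1)"

definition smote_point :: "(nat \<Rightarrow> real) \<Rightarrow> nat \<Rightarrow> nat \<Rightarrow> nat \<Rightarrow> real \<Rightarrow> real" where
  "smote_point x n i k l = x i + l * (x (nn_index x n i k) - x i)"

definition smote_space :: "real measure \<Rightarrow> nat \<Rightarrow> nat \<Rightarrow> ((nat \<Rightarrow> real) \<times> nat \<times> nat \<times> real) measure" where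
  "smote_space \<mu> n K =
     (PiM {..<n} (\<lambda>_. \<mu>)) \<Otimes>\<^sub>M
       ((measure_pmf (pmf_of_set {..<n})) \<Otimes>\<^sub>M
         ((measure_pmf (pmf_of_set {1..K})) \<Otimes>\<^sub>M uniform_measure lborel {0<..<1::real}))"

end

theory Submission
  imports Defs
begin

text \<open>Cut the line into cells of width \<open>\<epsilon>\<close>. If the cell of \<open>X\<^sub>i\<close> holds more than \<open>K\<close>
  sample points, then \<open>K\<close> other sample points lie within \<open>\<epsilon>\<close> of \<open>X\<^sub>i\<close>, so every SMOTE point
  generated from \<open>X\<^sub>i\<close> is \<open>\<epsilon>\<close>-close to it. Call \<open>i\<close> bad otherwise, or if \<open>|X\<^sub>i| > M\<close>. Only
  \<open>C(M, \<epsilon>)\<close> cells meet \<open>[-M, M]\<close>, and a cell holding at most \<open>K\<close> sample points contributes at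
  most \<open>K\<close> bad indices, so the expected number of bad indices is at most
  \<open>n P(|X| > M) + K C(M, \<epsilon>)\<close>. For the uniformly chosen \<open>i\<close> this gives
  \<open>P(|Z - X\<^sub>i| > \<epsilon>) \<le> P(|X| > M) + K C(M, \<epsilon>) / n\<close>; let \<open>n \<rightarrow> \<infinity>\<close>, then \<open>M \<rightarrow> \<infinity>\<close>.
  The argument never uses that \<open>X\<close> has no atoms.\<close>

lemma measure_pair_measure_Times:
  assumes "sigma_finite_measure N" "A \<in> sets M" "B \<in> sets N"
  shows "measure (M \<Otimes>\<^sub>M N) (A \<times> B) = measure M A * measure N B"
  using sigma_finite_measure.emeasure_pair_measure_Times[OF assms]
  by (simp add: measure_def enn2real_mult)

lemma measure_PiM_component:
  assumes "prob_space \<mu>" "i \<in> I" "A \<in> sets \<mu>"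
  shows "measure (PiM I (\<lambda>_. \<mu>)) {x \<in> space (PiM I (\<lambda>_. \<mu>)). x i \<in> A} = measure \<mu> A"
proof -
  interpret product_prob_space "\<lambda>_. \<mu>" I
    using assms(1) by (simp add: product_prob_space_def product_prob_space_axioms_def
        product_sigma_finite_def prob_space_imp_sigma_finite)
  show ?thesis
    using emeasure_PiM_Collect_single[OF assms(2,3)] by (simp add: measure_def)
qed

lemma (in finite_measure) sum_measure_le_if_multiplicity_le:
  assumes "finite I" "\<And>i. i \<in> I \<Longrightarrow> A i \<in> sets M"
    and "\<And>x. x \<in> space M \<Longrightarrow> card {i\<in>I. x \<in> A i} \<le> c"
  shows "(\<Sum>i\<in>I. measure M (A i)) \<le> c * measure M (space M)"
proof -
  have "(\<Sum>i\<in>I. measure M (A i)) = (\<Sum>i\<in>I. LINT x|M. indicator (A i) x)"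
    using assms(2) by (simp add: emeasure_finite)
  also have "\<dots> = (LINT x|M. (\<Sum>i\<in>I. indicator (A i) x))"
    using assms(2) by (intro Bochner_Integration.integral_sum[symmetric])
      (simp add: emeasure_finite less_top[symmetric])
  also have "\<dots> \<le> (LINT x|M. real c)"
  proof (rule integral_mono)
    fix x assume "x \<in> space M"
    have "(\<Sum>i\<in>I. indicator (A i) x :: real) = card {i\<in>I. x \<in> A i}"
      using assms(1) by (simp add: indicator_def Int_def)
    then show "(\<Sum>i\<in>I. indicator (A i) x) \<le> real c"
      using assms(3)[OF \<open>x \<in> space M\<close>] by simp
  qed (use assms(2) in \<open>auto simp: emeasure_finite less_top[symmetric]\<close>)
  also have "\<dots> = c * measure M (space M)"
    by simp
  finally show ?thesis .
qed

lemma measure_abs_gt_LIMSEQ_zero: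
  fixes \<mu> :: "real measure"
  assumes "finite_measure \<mu>" "sets \<mu> = sets borel"
  shows "(\<lambda>m. measure \<mu> {t. real m < \<bar>t\<bar>}) \<longlonglongrightarrow> 0"
proof -
  interpret finite_measure \<mu>
    by (fact assms(1))
  have "{t. real m < \<bar>t\<bar>} \<in> sets \<mu>" for m
    unfolding assms(2) by measurable
  then have "(\<lambda>m. measure \<mu> {t. real m < \<bar>t\<bar>}) \<longlonglongrightarrow> measure \<mu> (\<Inter>m. {t. real m < \<bar>t\<bar>})"
    by (intro finite_Lim_measure_decseq) (auto simp: decseq_def)
  moreover have "(\<Inter>m. {t::real. real m < \<bar>t\<bar>}) = {}"
  proof (intro equals0I)
    fix t assume "t \<in> (\<Inter>m. {t. real m < \<bar>t\<bar>})"
    then have "real m < \<bar>t\<bar>" for m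
      by blast
    then show False
      using real_arch_simple[of "\<bar>t\<bar>"] not_less by blast
  qed
  ultimately show ?thesis
    by simp
qed

lemma LIMSEQ_zero_if_le_add_div:
  fixes a :: "nat \<Rightarrow> real"
  assumes "\<And>n. 0 \<le> a n" and "\<And>\<delta>. \<delta> > 0 \<Longrightarrow> \<exists>C. \<forall>n\<ge>1. a n \<le> \<delta> + C / n"
  shows "a \<longlonglongrightarrow> 0"
proof (rule order_tendstoI)
  fix r :: real assume "r > 0"
  then obtain C where C: "\<forall>n\<ge>1. a n \<le> r / 2 + C / n"
    using assms(2)[of "r / 2"] by auto
  have "eventually (\<lambda>n. C / real n < r / 2) sequentially"
    using \<open>r > 0\<close> by (intro order_tendstoD(2)[OF lim_const_over_n]) simp
  then show "eventually (\<lambda>n. a n < r) sequentially"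
    using eventually_ge_at_top[of 1]
  proof eventually_elim
    case (elim n)
    then have "a n \<le> r / 2 + C / n"
      using C by blast
    with elim show "a n < r"
      by linarith
  qed
next
  fix r :: real assume "r < 0"
  then have "r < a n" for n
    using assms(1)[of n] by linarith
  then show "eventually (\<lambda>n. r < a n) sequentially"
    by (simp add: always_eventually)
qed

lemma abs_diff_less_if_floor_divide_eq:
  fixes a b e :: real
  assumes "e > 0" "\<lfloor>a / e\<rfloor> = \<lfloor>b / e\<rfloor>"
  shows "\<bar>a - b\<bar> < e"
proof -
  have "\<bar>a / e - b / e\<bar> < 1"
    using assms(2) floor_correct[of "a / e"] floor_correct[of "b / e"]
    unfolding abs_less_iff by linarith
  also have "\<bar>a / e - b / e\<bar> = \<bar>a - b\<bar> / e"
    using assms(1) by (simp add: diff_divide_distrib[symmetric])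
  finally show ?thesis
    using assms(1) by simp
qed

lemma card_small_fibres_le:
  assumes "finite I" "finite C"
  shows "card {i\<in>I. f i \<in> C \<and> card {j\<in>I. f j = f i} \<le> K} \<le> K * card C"
proof -
  define F where "F c = {i\<in>I. f i = c \<and> card {j\<in>I. f j = c} \<le> K}" for c
  have "card (F c) \<le> K" for c
  proof (cases "card {j\<in>I. f j = c} \<le> K")
    case True
    have "card (F c) \<le> card {j\<in>I. f j = c}"
      unfolding F_def using assms(1) by (intro card_mono) auto
    with True show ?thesis by linarith
  qed (simp add: F_def)
  have "card {i\<in>I. f i \<in> C \<and> card {j\<in>I. f j = f i} \<le> K} \<le> card (\<Union>c\<in>C. F c)"
    using assms by (intro card_mono) (auto simp: F_def)
  also have "\<dots> \<le> (\<Sum>c\<in>C. card (F c))"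
    by (rule card_UN_le[OF assms(2)])
  also have "\<dots> \<le> K * card C"
    using sum_mono[of C "\<lambda>c. card (F c)" "\<lambda>_. K"] \<open>\<And>c. card (F c) \<le> K\<close> by (simp add: mult.commute)
  finally show ?thesis .
qed

lemma sorted_key_nth_le_if_length_filter_gt:
  assumes "sorted (map f ys)" "k < length (filter (\<lambda>y. f y \<le> e) ys)"
  shows "f (ys ! k) \<le> e"
proof (rule ccontr)
  let ?P = "\<lambda>y. f y \<le> e"
  assume "\<not> ?P (ys ! k)"
  have k: "k < length ys"
    using assms(2) length_filter_le order.strict_trans2 by blast
  have "\<not> ?P (ys ! (k + p))" if "k + p < length ys" for p
    using \<open>\<not> ?P (ys ! k)\<close> sorted_nth_mono[OF assms(1), of k "k + p"] that by auto
  then have "filter ?P (drop k ys) = []"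
    using k by (auto simp: filter_empty_conv in_set_conv_nth)
  then have "length (filter ?P ys) = length (filter ?P (take k ys))"
    by (metis append_Nil2 append_take_drop_id filter_append)
  also have "\<dots> \<le> k"
    using length_filter_le[of ?P "take k ys"] by simp
  finally show False
    using assms(2) by simp
qed

definition cell_count :: "real \<Rightarrow> (nat \<Rightarrow> real) \<Rightarrow> nat \<Rightarrow> nat \<Rightarrow> nat" where
  "cell_count \<epsilon> x n i = card {j\<in>{..<n}. \<lfloor>x j / \<epsilon>\<rfloor> = \<lfloor>x i / \<epsilon>\<rfloor>}"

lemma card_sparse_cells_le:
  assumes "\<epsilon> > 0"
  shows "card {i\<in>{..<n}. \<bar>x i\<bar> \<le> M \<and> cell_count \<epsilon> x n i \<le> K}
    \<le> K * card {\<lfloor>-M / \<epsilon>\<rfloor>..\<lfloor>M / \<epsilon>\<rfloor>}"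
proof -
  have "\<lfloor>x i / \<epsilon>\<rfloor> \<in> {\<lfloor>-M / \<epsilon>\<rfloor>..\<lfloor>M / \<epsilon>\<rfloor>}" if "\<bar>x i\<bar> \<le> M" for i
    using that assms by (auto intro!: floor_mono simp: field_simps)
  then have "card {i\<in>{..<n}. \<bar>x i\<bar> \<le> M \<and> cell_count \<epsilon> x n i \<le> K}
      \<le> card {i\<in>{..<n}. \<lfloor>x i / \<epsilon>\<rfloor> \<in> {\<lfloor>-M / \<epsilon>\<rfloor>..\<lfloor>M / \<epsilon>\<rfloor>} \<and>
                card {j\<in>{..<n}. \<lfloor>x j / \<epsilon>\<rfloor> = \<lfloor>x i / \<epsilon>\<rfloor>} \<le> K}"
    unfolding cell_count_def by (intro card_mono) auto
  also have "\<dots> \<le> K * card {\<lfloor>-M / \<epsilon>\<rfloor>..\<lfloor>M / \<epsilon>\<rfloor>}"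
    by (rule card_small_fibres_le) auto
  finally show ?thesis .
qed

lemma card_close_ge_if_cell_count_gt:
  assumes "\<epsilon> > 0" "i < n" "K < cell_count \<epsilon> x n i"
  shows "K \<le> card {j\<in>{..<n}. j \<noteq> i \<and> \<bar>x j - x i\<bar> \<le> \<epsilon>}"
proof -
  define T where "T = {j\<in>{..<n}. \<lfloor>x j / \<epsilon>\<rfloor> = \<lfloor>x i / \<epsilon>\<rfloor>}"
  have "T - {i} \<subseteq> {j\<in>{..<n}. j \<noteq> i \<and> \<bar>x j - x i\<bar> \<le> \<epsilon>}"
    unfolding T_def using abs_diff_less_if_floor_divide_eq[OF assms(1)] by (auto intro: less_imp_le)
  then have "card (T - {i}) \<le> card {j\<in>{..<n}. j \<noteq> i \<and> \<bar>x j - x i\<bar> \<le> \<epsilon>}"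
    by (intro card_mono) auto
  moreover have "card (T - {i}) = cell_count \<epsilon> x n i - 1"
    using assms(2) by (simp add: T_def cell_count_def)
  ultimately show ?thesis
    using assms(3) by linarith
qed

lemma measurable_cell_count [measurable]:
  assumes "i \<in> {..<n}"
  shows "(\<lambda>x. cell_count \<epsilon> x n i) \<in> measurable (PiM {..<n} (\<lambda>_. borel)) (count_space UNIV)"
proof -
  have "cell_count \<epsilon> x n i = (\<Sum>j<n. if \<lfloor>x j / \<epsilon>\<rfloor> = \<lfloor>x i / \<epsilon>\<rfloor> then 1 else 0)" for x
    by (simp add: cell_count_def sum.If_cases Int_def)
  moreover have "(\<lambda>x. \<Sum>j<n. if \<lfloor>x j / \<epsilon>\<rfloor> = \<lfloor>x i / \<epsilon>\<rfloor> then 1 else 0 :: nat)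
      \<in> measurable (PiM {..<n} (\<lambda>_. borel)) (count_space UNIV)"
    using assms by measurable
  ultimately show ?thesis by simp
qed

lemma abs_nn_index_diff_le:
  assumes "1 \<le> k" "k \<le> card {j\<in>{..<n}. j \<noteq> i \<and> \<bar>x j - x i\<bar> \<le> \<epsilon>}"
  shows "\<bar>x (nn_index x n i k) - x i\<bar> \<le> \<epsilon>"
proof -
  define ys where "ys = sort_key (\<lambda>j. \<bar>x j - x i\<bar>) (filter (\<lambda>j. j \<noteq> i) [0..<n])"
  have "card {j\<in>{..<n}. j \<noteq> i \<and> \<bar>x j - x i\<bar> \<le> \<epsilon>}
      = card (set (filter (\<lambda>j. \<bar>x j - x i\<bar> \<le> \<epsilon>) ys))"
    by (rule arg_cong[where f = card]) (auto simp: ys_def)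
  also have "\<dots> = length (filter (\<lambda>j. \<bar>x j - x i\<bar> \<le> \<epsilon>) ys)"
    by (rule distinct_card) (simp add: ys_def)
  finally have "k - 1 < length (filter (\<lambda>j. \<bar>x j - x i\<bar> \<le> \<epsilon>) ys)"
    using assms by linarith
  then show ?thesis
    unfolding nn_index_def ys_def[symmetric]
    by (rule sorted_key_nth_le_if_length_filter_gt[of "\<lambda>j. \<bar>x j - x i\<bar>", rotated])
      (simp add: ys_def)
qed

lemma abs_smote_point_diff_le:
  assumes "\<epsilon> > 0" "i < n" "k \<in> {1..K}" "l \<in> {0..1}" "K < cell_count \<epsilon> x n i"
  shows "\<bar>smote_point x n i k l - x i\<bar> \<le> \<epsilon>"
proof -
  have "\<bar>smote_point x n i k l - x i\<bar> = l * \<bar>x (nn_index x n i k) - x i\<bar>"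
    using assms(4) by (simp add: smote_point_def abs_mult)
  also have "\<dots> \<le> \<bar>x (nn_index x n i k) - x i\<bar>"
    using assms(4) by (intro mult_left_le_one_le) auto
  also have "\<dots> \<le> \<epsilon>"
    using assms card_close_ge_if_cell_count_gt[OF assms(1,2,5)] by (intro abs_nn_index_diff_le) auto
  finally show ?thesis .
qed

lemma sum_measure_outside_or_sparse_le:
  fixes \<mu> :: "real measure" and n K :: nat and \<epsilon> M :: real
  assumes \<mu>: "prob_space \<mu>" "sets \<mu> = sets borel" and "\<epsilon> > 0"
  defines "P \<equiv> PiM {..<n} (\<lambda>_. \<mu>)"
  shows "(\<Sum>i<n. measure P {x \<in> space P. M < \<bar>x i\<bar> \<or> cell_count \<epsilon> x n i \<le> K})
    \<le> n * measure \<mu> {t. M < \<bar>t\<bar>} + K * card {\<lfloor>-M / \<epsilon>\<rfloor>..\<lfloor>M / \<epsilon>\<rfloor>}"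
proof -
  interpret P: prob_space P
    unfolding P_def by (rule prob_space_PiM) (use \<mu>(1) in simp)
  have sets_P [measurable_cong]: "sets P = sets (PiM {..<n} (\<lambda>_. borel))"
    unfolding P_def by (intro sets_PiM_cong) (auto simp: \<mu>(2))
  define outside where "outside i = {x \<in> space P. M < \<bar>x i\<bar>}" for i
  define sparse where "sparse i = {x \<in> space P. \<bar>x i\<bar> \<le> M \<and> cell_count \<epsilon> x n i \<le> K}" for i
  have outside_sets: "outside i \<in> sets P" and sparse_sets: "sparse i \<in> sets P" if "i < n" for i
  proof -
    have [measurable]: "i \<in> {..<n}"
      using that by simp
    show "outside i \<in> sets P" "sparse i \<in> sets P"
      unfolding outside_def sparse_def by measurable
  qed
  have "measure P {x \<in> space P. M < \<bar>x i\<bar> \<or> cell_count \<epsilon> x n i \<le> K}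
      \<le> measure \<mu> {t. M < \<bar>t\<bar>} + measure P (sparse i)" if "i < n" for i
  proof -
    have "{t. M < \<bar>t\<bar>} \<in> sets \<mu>"
      unfolding \<mu>(2) by measurable
    then have "measure P (outside i) = measure \<mu> {t. M < \<bar>t\<bar>}"
      using measure_PiM_component[OF \<mu>(1), of i "{..<n}" "{t. M < \<bar>t\<bar>}"] that
      by (simp add: outside_def P_def)
    moreover have "{x \<in> space P. M < \<bar>x i\<bar> \<or> cell_count \<epsilon> x n i \<le> K} = outside i \<union> sparse i"
      by (auto simp: outside_def sparse_def)
    ultimately show ?thesis
      using measure_Un_le[OF outside_sets[OF that] sparse_sets[OF that]] by simp
  qed
  then have "(\<Sum>i<n. measure P {x \<in> space P. M < \<bar>x i\<bar> \<or> cell_count \<epsilon> x n i \<le> K})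
      \<le> (\<Sum>i<n. measure \<mu> {t. M < \<bar>t\<bar>} + measure P (sparse i))"
    by (intro sum_mono) simp
  also have "\<dots> \<le> n * measure \<mu> {t. M < \<bar>t\<bar>} + K * card {\<lfloor>-M / \<epsilon>\<rfloor>..\<lfloor>M / \<epsilon>\<rfloor>}"
  proof -
    have "(\<Sum>i<n. measure P (sparse i)) \<le> K * card {\<lfloor>-M / \<epsilon>\<rfloor>..\<lfloor>M / \<epsilon>\<rfloor>} * measure P (space P)"
    proof (rule P.sum_measure_le_if_multiplicity_le)
      fix x assume "x \<in> space P"
      then have "{i \<in> {..<n}. x \<in> sparse i} = {i\<in>{..<n}. \<bar>x i\<bar> \<le> M \<and> cell_count \<epsilon> x n i \<le> K}"
        by (auto simp: sparse_def)
      then show "card {i \<in> {..<n}. x \<in> sparse i} \<le> K * card {\<lfloor>-M / \<epsilon>\<rfloor>..\<lfloor>M / \<epsilon>\<rfloor>}"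
        using card_sparse_cells_le[OF \<open>\<epsilon> > 0\<close>] by simp
    qed (auto simp: sparse_sets)
    then show ?thesis
      by (simp add: sum.distrib P.prob_space)
  qed
  finally show ?thesis .
qed

lemma measure_smote_space_Times:
  assumes "prob_space \<mu>" "A \<in> sets (PiM {..<n} (\<lambda>_. \<mu>))" "L \<in> sets borel"
  shows "measure (smote_space \<mu> n K) (A \<times> I \<times> J \<times> L)
    = measure (PiM {..<n} (\<lambda>_. \<mu>)) A * measure (pmf_of_set {..<n}) I
      * measure (pmf_of_set {1..K}) J * measure (uniform_measure lborel {0<..<1::real}) L"
proof -
  let ?U = "uniform_measure lborel {0<..<1::real}"
  let ?R = "measure_pmf (pmf_of_set {1..K}) \<Otimes>\<^sub>M ?U"
  have U: "prob_space ?U"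
    by (intro prob_space_uniform_measure) auto
  have R: "prob_space ?R"
    by (intro prob_space_pair U measure_pmf.prob_space_axioms)
  have QR: "prob_space (measure_pmf (pmf_of_set {..<n}) \<Otimes>\<^sub>M ?R)"
    by (intro prob_space_pair R measure_pmf.prob_space_axioms)
  have JL: "J \<times> L \<in> sets ?R"
    using assms(3) by (intro pair_measureI) auto
  have "measure (smote_space \<mu> n K) (A \<times> I \<times> J \<times> L)
      = measure (PiM {..<n} (\<lambda>_. \<mu>)) A
        * measure (measure_pmf (pmf_of_set {..<n}) \<Otimes>\<^sub>M ?R) (I \<times> J \<times> L)"
    unfolding smote_space_def using assms(2,3) JL
    by (intro measure_pair_measure_Times prob_space_imp_sigma_finite QR pair_measureI) auto
  also have "measure (measure_pmf (pmf_of_set {..<n}) \<Otimes>\<^sub>M ?R) (I \<times> J \<times> L)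
      = measure (pmf_of_set {..<n}) I * measure ?R (J \<times> L)"
    using JL by (intro measure_pair_measure_Times prob_space_imp_sigma_finite R) auto
  also have "measure ?R (J \<times> L) = measure (pmf_of_set {1..K}) J * measure ?U L"
    using assms(3) by (intro measure_pair_measure_Times prob_space_imp_sigma_finite U) auto
  finally show ?thesis
    by (simp only: mult.assoc)
qed

lemma prob_space_smote_space:
  assumes "prob_space \<mu>"
  shows "prob_space (smote_space \<mu> n K)"
  unfolding smote_space_def using assms
  by (intro prob_space_pair prob_space_PiM measure_pmf.prob_space_axioms
      prob_space_uniform_measure) auto

lemma AE_smote_space_in_ranges:
  assumes "prob_space \<mu>" "n \<ge> 1" "K \<ge> 1"
  shows "AE (x, i, k, l) in smote_space \<mu> n K. i < n \<and> k \<in> {1..K} \<and> l \<in> {0<..<1}"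
proof -
  interpret S: prob_space "smote_space \<mu> n K"
    using assms(1) by (rule prob_space_smote_space)
  let ?P = "PiM {..<n} (\<lambda>_. \<mu>)"
  have "measure (smote_space \<mu> n K) (space ?P \<times> {..<n} \<times> {1..K} \<times> {0<..<1}) = 1"
    using assms prob_space.prob_space[OF prob_space_PiM[of "{..<n}" "\<lambda>_. \<mu>"]]
    by (simp add: measure_smote_space_Times measure_pmf_of_set lessThan_empty_iff)
  then show ?thesis
    by (rule eventually_mono[OF S.AE_prob_1]) auto
qed

lemma measure_smote_far_le:
  fixes \<mu> :: "real measure" and n K :: nat and \<epsilon> M :: real
  assumes \<mu>: "prob_space \<mu>" "sets \<mu> = sets borel" and "K \<ge> 1" "\<epsilon> > 0" "n \<ge> 1"
  shows "measure (smote_space \<mu> n K)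
      {(x, i, k, l) \<in> space (smote_space \<mu> n K). \<bar>smote_point x n i k l - x i\<bar> > \<epsilon>}
    \<le> measure \<mu> {t. M < \<bar>t\<bar>} + K * card {\<lfloor>-M / \<epsilon>\<rfloor>..\<lfloor>M / \<epsilon>\<rfloor>} / n"
proof -
  let ?S = "smote_space \<mu> n K" and ?P = "PiM {..<n} (\<lambda>_. \<mu>)"
  interpret S: prob_space ?S
    using \<mu>(1) by (rule prob_space_smote_space)
  define bad where "bad i = {x \<in> space ?P. M < \<bar>x i\<bar> \<or> cell_count \<epsilon> x n i \<le> K}" for i
  have sets_P [measurable_cong]: "sets ?P = sets (PiM {..<n} (\<lambda>_. borel))"
    by (intro sets_PiM_cong) (auto simp: \<mu>(2))
  have bad_sets: "bad i \<times> {i} \<times> UNIV \<times> UNIV \<in> sets ?S" "bad i \<in> sets ?P" if "i < n" for i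
  proof -
    have [measurable]: "i \<in> {..<n}"
      using that by simp
    show "bad i \<in> sets ?P"
      unfolding bad_def by measurable
    then show "bad i \<times> {i} \<times> UNIV \<times> UNIV \<in> sets ?S"
      unfolding smote_space_def by (intro pair_measureI) auto
  qed
  have "AE (x, i, k, l) in ?S. \<bar>smote_point x n i k l - x i\<bar> > \<epsilon> \<longrightarrow> i < n \<and> x \<in> bad i"
    using AE_smote_space_in_ranges[OF \<mu>(1) \<open>n \<ge> 1\<close> \<open>K \<ge> 1\<close>] AE_space
  proof eventually_elim
    case (elim z)
    obtain x i k l where z: "z = (x, i, k, l)"
      by (cases z)
    have "\<bar>smote_point x n i k l - x i\<bar> \<le> \<epsilon>" if "K < cell_count \<epsilon> x n i"
      using elim z that by (intro abs_smote_point_diff_le[OF \<open>\<epsilon> > 0\<close>]) auto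
    then show ?case
      using elim z by (auto simp: bad_def smote_space_def space_pair_measure)
  qed
  then have "measure ?S {(x, i, k, l) \<in> space ?S. \<bar>smote_point x n i k l - x i\<bar> > \<epsilon>}
      \<le> measure ?S (\<Union>i<n. bad i \<times> {i} \<times> UNIV \<times> UNIV)"
    using bad_sets by (intro S.finite_measure_mono_AE) (auto elim!: eventually_mono)
  also have "\<dots> \<le> (\<Sum>i<n. measure ?S (bad i \<times> {i} \<times> UNIV \<times> UNIV))"
    using bad_sets by (intro measure_UNION_le) auto
  also have "\<dots> = (\<Sum>i<n. measure ?P (bad i)) / n"
    using bad_sets(2) \<mu>(1) measure_smote_space_Times[of \<mu> "bad _" n UNIV K "{_}" UNIV, simplified]
    by (simp add: sum_divide_distrib measure_pmf_of_set lessThan_empty_iff)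
  also have "\<dots> \<le> (n * measure \<mu> {t. M < \<bar>t\<bar>} + K * card {\<lfloor>-M / \<epsilon>\<rfloor>..\<lfloor>M / \<epsilon>\<rfloor>}) / n"
    unfolding bad_def by (intro divide_right_mono sum_measure_outside_or_sparse_le \<mu> \<open>\<epsilon> > 0\<close>) auto
  finally show ?thesis
    using \<open>n \<ge> 1\<close> by (simp add: add_divide_distrib)
qed

theorem corollary2:
  fixes \<mu> :: "real measure" and K :: nat
  assumes "prob_space \<mu>"
    and "sets \<mu> = sets borel"
    and "\<forall>a. measure \<mu> {a} = 0"
    and "K \<ge> 1"
  shows "\<forall>\<epsilon>>0. (\<lambda>n. measure (smote_space \<mu> n K)
            {(x, i, k, l) \<in> space (smote_space \<mu> n K).
               \<bar>smote_point x n i k l - x i\<bar> > \<epsilon>}) \<longlonglongrightarrow> 0"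
proof (intro allI impI)
  fix \<epsilon> :: real assume "\<epsilon> > 0"
  show "(\<lambda>n. measure (smote_space \<mu> n K)
      {(x, i, k, l) \<in> space (smote_space \<mu> n K). \<bar>smote_point x n i k l - x i\<bar> > \<epsilon>}) \<longlonglongrightarrow> 0"
  proof (rule LIMSEQ_zero_if_le_add_div)
    fix \<delta> :: real assume "\<delta> > 0"
    have "(\<lambda>m. measure \<mu> {t. real m < \<bar>t\<bar>}) \<longlonglongrightarrow> 0"
      using assms(1,2) by (intro measure_abs_gt_LIMSEQ_zero prob_space.finite_measure)
    then obtain m :: nat where "measure \<mu> {t. real m < \<bar>t\<bar>} < \<delta>"
      using LIMSEQ_D[OF _ \<open>\<delta> > 0\<close>] by fastforce
    then show "\<exists>C. \<forall>n\<ge>1. measure (smote_space \<mu> n K)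
        {(x, i, k, l) \<in> space (smote_space \<mu> n K). \<bar>smote_point x n i k l - x i\<bar> > \<epsilon>}
      \<le> \<delta> + C / n"
      using measure_smote_far_le[OF assms(1,2,4) \<open>\<epsilon> > 0\<close>, where M = "real m"]
      by (intro exI[of _ "real (K * card {\<lfloor>- real m / \<epsilon>\<rfloor>..\<lfloor>real m / \<epsilon>\<rfloor>})"]) force
  qed (rule measure_nonneg)
qed

end
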